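(* Let $K=2$ and suppose that for every horizon $T$ (a multiple of $100$) a valid pair $(\eta,\gamma)=(\eta_T,\gamma_T)$ in the non-trivial regime is chosen. Then there exists $T_0$ such that for all $T\ge T_0$, WSU-UX run on the two-phase loss sequence satisfies $\mathbb{E}[\pi_{t,2}]\le\frac14$ for every round $t$ with $T_1+T_2+T_3<t\le T$.
   Context: WSU-UX. Fix integers $K\ge 2$ and $T\ge 1$ and hyperparameters $\eta,\gamma$. The pair $(\eta,\gamma)$ is called valid if $\eta,\gamma\in(0,1/2)$ and $\eta K/\gamma\le 1/2$. Given a fixed loss sequence $\ell_t\in[0,1]^K$, WSU-UX sets $\pi_{1,i}=1/K$ and in each round $t$: forms $\tilde\pi_{t,i}=(1-\gamma)\pi_{t,i}+\gamma/K$; draws $I_t$ with $\Pr(I_t=i\mid\mathcal F_{t-1})=\tilde\pi_{t,i}$; sets $\hat\ell_{t,i}=\ell_{t,i}\mathbf 1[I_t=i]/\tilde\pi_{t,i}$; and updates $\pi_{t+1,i}=\pi_{t,i}\bigl(1-\eta(\hat\ell_{t,i}-\sum_{j}\pi_{t,j}\hat\ell_{t,j})\bigr)$; $\mathcal F_t$ is the history generated by $I_1,\dots,I_t$. Non-trivial regime: $\eta\ge T^{-2/3}$ and $\gamma\le T^{-1/3}$. Two-phase loss sequence ($K=2$, $T$ a multiple of $100$): with $T_1=\frac{T}{100}$, $\ell_{t,1}=1,\ell_{t,2}=0$ for $1\le t\le T_1$ and $\ell_{t,1}=0,\ell_{t,2}=1$ for $T_1<t\le T$. Further $T_2=\frac{2}{10}T$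 and $T_3=\frac{1}{10}T$. *)

theory Defs
  imports Complex_Main
begin

text \<open>Arms are indexed 1..K. Losses: loss t i for round t (1-based) and arm i.
  A history h is the list [I_1, ..., I_n] of drawn arms (chronological).\<close>

definition valid_pair :: "nat \<Rightarrow> real \<Rightarrow> real \<Rightarrow> bool" where
  "valid_pair K eta gamma \<longleftrightarrow>
     0 < eta \<and> eta < 1/2 \<and> 0 < gamma \<and> gamma < 1/2 \<and> eta * real K / gamma \<le> 1/2"

definition nontrivial_regime :: "nat \<Rightarrow> real \<Rightarrow> real \<Rightarrow> bool" where
  "nontrivial_regime T eta gamma \<longleftrightarrow>
     eta \<ge> real T powr (-2/3) \<and> gamma \<le> real T powr (-1/3)"

definition mix :: "nat \<Rightarrow> real \<Rightarrow> (nat \<Rightarrow> real) \<Rightarrow> nat \<Rightarrow> real" where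
  "mix K gamma p i = (1 - gamma) * p i + gamma / real K"

definition lhat :: "nat \<Rightarrow> real \<Rightarrow> (nat \<Rightarrow> nat \<Rightarrow> real) \<Rightarrow> nat \<Rightarrow> (nat \<Rightarrow> real) \<Rightarrow> nat \<Rightarrow> nat \<Rightarrow> real" where
  "lhat K gamma loss t p I i = (if i = I then loss t i / mix K gamma p i else 0)"

definition wsu_step :: "nat \<Rightarrow> real \<Rightarrow> real \<Rightarrow> (nat \<Rightarrow> nat \<Rightarrow> real) \<Rightarrow> nat \<Rightarrow> (nat \<Rightarrow> real) \<Rightarrow> nat \<Rightarrow> nat \<Rightarrow> real" where
  "wsu_step K eta gamma loss t p I i =
     p i * (1 - eta * (lhat K gamma loss t p I i - (\<Sum>j=1..K. p j * lhat K gamma loss t p I j)))"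

text \<open>wsu_pi K eta gamma loss h n = pi_{n+1} as a function of the history h
  (only the first n entries of h are used).\<close>
fun wsu_pi :: "nat \<Rightarrow> real \<Rightarrow> real \<Rightarrow> (nat \<Rightarrow> nat \<Rightarrow> real) \<Rightarrow> nat list \<Rightarrow> nat \<Rightarrow> nat \<Rightarrow> real" where
  "wsu_pi K eta gamma loss h 0 = (\<lambda>i. 1 / real K)"
| "wsu_pi K eta gamma loss h (Suc n) =
     wsu_step K eta gamma loss (Suc n) (wsu_pi K eta gamma loss h n) (h ! n)"

definition hist_prob :: "nat \<Rightarrow> real \<Rightarrow> real \<Rightarrow> (nat \<Rightarrow> nat \<Rightarrow> real) \<Rightarrow> nat list \<Rightarrow> real" where
  "hist_prob K eta gamma loss h =
     (\<Prod>s<length h. mix K gamma (wsu_pi K eta gamma loss h s) (h ! s))"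

definition histories :: "nat \<Rightarrow> nat \<Rightarrow> nat list set" where
  "histories K n = {h. length h = n \<and> set h \<subseteq> {1..K}}"

text \<open>E[pi_{t,i}] for round t \<ge> 1: pi_t depends on I_1..I_{t-1}.\<close>
definition expected_pi :: "nat \<Rightarrow> real \<Rightarrow> real \<Rightarrow> (nat \<Rightarrow> nat \<Rightarrow> real) \<Rightarrow> nat \<Rightarrow> nat \<Rightarrow> real" where
  "expected_pi K eta gamma loss t i =
     (\<Sum>h\<in>histories K (t - 1).
        hist_prob K eta gamma loss h * wsu_pi K eta gamma loss h (t - 1) i)"

text \<open>Two-phase loss sequence for horizon T (K = 2), T_1 = T/100.\<close>
definition two_phase_loss :: "nat \<Rightarrow> nat \<Rightarrow> nat \<Rightarrow> real" where
  "two_phase_loss T t i =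
     (if real t \<le> real T / 100
      then (if i = 1 then 1 else 0)
      else (if i = 2 then 1 else 0))"

end

theory Submission
  imports Defs
begin

text \<open>Track the odds \<open>\<pi>\<^sub>t\<^sub>,\<^sub>2 / \<pi>\<^sub>t\<^sub>,\<^sub>1\<close>, which dominate \<open>\<pi>\<^sub>t\<^sub>,\<^sub>2\<close>. Conditionally on the past,
  one round multiplies their expectation by at most \<open>1 + 2\<eta>\<close> while arm 1 carries the loss and
  by at most \<open>1 - \<eta>/2\<close> once arm 2 does (the exploration \<open>\<gamma> \<ge> 4\<eta>\<close> keeps the
  importance weights tame). After \<open>T\<^sub>1 + T\<^sub>2 + T\<^sub>3 = 31 T\<^sub>1\<close> rounds the expected odds are at most
  \<open>exp (2\<eta>T\<^sub>1 - 15\<eta>T\<^sub>1) = exp (-13\<eta>T/100)\<close>, and \<open>\<eta>T \<ge> T\<^sup>1\<^sup>/\<^sup>3\<close> in the non-trivial regime.\<close>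

definition hist_expectation ::
    "nat \<Rightarrow> real \<Rightarrow> real \<Rightarrow> (nat \<Rightarrow> nat \<Rightarrow> real) \<Rightarrow> nat \<Rightarrow> ((nat \<Rightarrow> real) \<Rightarrow> real) \<Rightarrow> real" where
  "hist_expectation K eta gamma loss n F =
     (\<Sum>h\<in>histories K n. hist_prob K eta gamma loss h * F (wsu_pi K eta gamma loss h n))"

lemma expected_pi_eq_hist_expectation:
  "expected_pi K eta gamma loss t i = hist_expectation K eta gamma loss (t - 1) (\<lambda>p. p i)"
  by (simp add: expected_pi_def hist_expectation_def)

lemma wsu_pi_append:
  "n \<le> length h \<Longrightarrow> wsu_pi K eta gamma loss (h @ xs) n = wsu_pi K eta gamma loss h n"
  by (induction n) (auto simp: nth_append)

lemma hist_prob_snoc: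
  "hist_prob K eta gamma loss (h @ [x]) =
     hist_prob K eta gamma loss h * mix K gamma (wsu_pi K eta gamma loss h (length h)) x"
proof -
  have "(\<Prod>s<length h. mix K gamma (wsu_pi K eta gamma loss (h @ [x]) s) ((h @ [x]) ! s))
      = (\<Prod>s<length h. mix K gamma (wsu_pi K eta gamma loss h s) (h ! s))"
    by (rule prod.cong) (auto simp: nth_append wsu_pi_append)
  then show ?thesis
    by (simp add: hist_prob_def wsu_pi_append)
qed

lemma histories_Suc:
  "histories K (Suc n) = (\<lambda>(h, x). h @ [x]) ` (histories K n \<times> {1..K})"
proof (intro equalityI subsetI)
  fix h' assume "h' \<in> histories K (Suc n)"
  then have "h' \<noteq> []" "length h' = Suc n" "set h' \<subseteq> {1..K}"
    by (auto simp: histories_def)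
  moreover have "set (butlast h') \<subseteq> {1..K}"
    using \<open>set h' \<subseteq> {1..K}\<close> by (meson in_set_butlastD subset_iff)
  moreover have "last h' \<in> {1..K}"
    using \<open>h' \<noteq> []\<close> \<open>set h' \<subseteq> {1..K}\<close> by (meson last_in_set subsetD)
  ultimately have "h' = butlast h' @ [last h']" "(butlast h', last h') \<in> histories K n \<times> {1..K}"
    unfolding histories_def by auto
  then show "h' \<in> (\<lambda>(h, x). h @ [x]) ` (histories K n \<times> {1..K})"
    by (metis (no_types, lifting) case_prod_conv image_eqI)
qed (auto simp: histories_def)

lemma sum_histories_Suc:
  "(\<Sum>h\<in>histories K (Suc n). F h) = (\<Sum>h\<in>histories K n. \<Sum>x\<in>{1..K}. F (h @ [x]))"
proof -
  have inj: "inj_on (\<lambda>(h, x). h @ [x]) (histories K n \<times> {1..K})"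
    by (auto simp: inj_on_def)
  show ?thesis
    unfolding histories_Suc sum.reindex[OF inj] by (simp add: sum.cartesian_product case_prod_beta)
qed

lemma hist_expectation_Suc:
  "hist_expectation K eta gamma loss (Suc n) F =
     hist_expectation K eta gamma loss n
       (\<lambda>p. \<Sum>x\<in>{1..K}. mix K gamma p x * F (wsu_step K eta gamma loss (Suc n) p x))"
  unfolding hist_expectation_def sum_histories_Suc
proof (rule sum.cong[OF refl])
  fix h assume "h \<in> histories K n"
  then have "length h = n" by (simp add: histories_def)
  then show "(\<Sum>x\<in>{1..K}. hist_prob K eta gamma loss (h @ [x]) *
                F (wsu_pi K eta gamma loss (h @ [x]) (Suc n))) =
      hist_prob K eta gamma loss h * (\<Sum>x\<in>{1..K}. mix K gamma (wsu_pi K eta gamma loss h n) x *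
                F (wsu_step K eta gamma loss (Suc n) (wsu_pi K eta gamma loss h n) x))"
    by (auto simp: sum_distrib_left hist_prob_snoc wsu_pi_append intro!: sum.cong)
qed

definition wsu_invariant ::
    "nat \<Rightarrow> real \<Rightarrow> real \<Rightarrow> (nat \<Rightarrow> nat \<Rightarrow> real) \<Rightarrow> ((nat \<Rightarrow> real) \<Rightarrow> bool) \<Rightarrow> bool" where
  "wsu_invariant K eta gamma loss P \<longleftrightarrow> P (\<lambda>i. 1 / real K) \<and>
     (\<forall>t p x. P p \<longrightarrow> x \<in> {1..K} \<longrightarrow>
        0 \<le> mix K gamma p x \<and> P (wsu_step K eta gamma loss t p x))"

lemma wsu_invariant_wsu_pi:
  assumes P: "wsu_invariant K eta gamma loss P" and h: "set h \<subseteq> {1..K}"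
  shows "n \<le> length h \<Longrightarrow> P (wsu_pi K eta gamma loss h n)"
proof (induction n)
  case (Suc n)
  then have "h ! n \<in> {1..K}" using h by (meson Suc_le_eq nth_mem subsetD)
  then show ?case using Suc P by (simp add: wsu_invariant_def)
qed (use P in \<open>simp add: wsu_invariant_def\<close>)

lemma hist_prob_nonneg:
  assumes P: "wsu_invariant K eta gamma loss P" and h: "h \<in> histories K n"
  shows "0 \<le> hist_prob K eta gamma loss h"
  unfolding hist_prob_def
proof (rule prod_nonneg)
  fix s assume "s \<in> {..<length h}"
  moreover have "set h \<subseteq> {1..K}" using h by (simp add: histories_def)
  ultimately show "0 \<le> mix K gamma (wsu_pi K eta gamma loss h s) (h ! s)"
    using P wsu_invariant_wsu_pi[OF P, of h s] by (auto simp: wsu_invariant_def dest: nth_mem)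
qed

lemma hist_expectation_mono:
  assumes P: "wsu_invariant K eta gamma loss P" and FG: "\<And>p. P p \<Longrightarrow> F p \<le> G p"
  shows "hist_expectation K eta gamma loss n F \<le> hist_expectation K eta gamma loss n G"
  unfolding hist_expectation_def
proof (rule sum_mono)
  fix h assume h: "h \<in> histories K n"
  then have "P (wsu_pi K eta gamma loss h n)"
    by (intro wsu_invariant_wsu_pi[OF P]) (auto simp: histories_def)
  then show "hist_prob K eta gamma loss h * F (wsu_pi K eta gamma loss h n)
           \<le> hist_prob K eta gamma loss h * G (wsu_pi K eta gamma loss h n)"
    using FG hist_prob_nonneg[OF P h] by (simp add: mult_left_mono)
qed

lemma hist_expectation_Suc_le:
  assumes P: "wsu_invariant K eta gamma loss P"
    and step: "\<And>p. P p \<Longrightarrow>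
      (\<Sum>x\<in>{1..K}. mix K gamma p x * F (wsu_step K eta gamma loss (Suc n) p x)) \<le> c * F p"
  shows "hist_expectation K eta gamma loss (Suc n) F \<le> c * hist_expectation K eta gamma loss n F"
proof -
  have "hist_expectation K eta gamma loss (Suc n) F \<le> hist_expectation K eta gamma loss n (\<lambda>p. c * F p)"
    unfolding hist_expectation_Suc by (rule hist_expectation_mono[OF P step])
  also have "\<dots> = c * hist_expectation K eta gamma loss n F"
    by (simp add: hist_expectation_def sum_distrib_left mult.left_commute)
  finally show ?thesis .
qed

lemma wsu_step_zero_loss:
  assumes "loss t x = 0"
  shows "wsu_step K eta gamma loss t p x = p"
proof -
  have "lhat K gamma loss t p x j = 0" for j
    using assms by (simp add: lhat_def)
  then show ?thesis
    by (simp add: wsu_step_def fun_eq_iff)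
qed

lemma wsu_step_drawn:
  assumes "x \<in> {1..K}"
  shows "wsu_step K eta gamma loss t p x i =
    p i * (1 - eta * ((if i = x then loss t x / mix K gamma p x else 0) - p x * loss t x / mix K gamma p x))"
proof -
  have "(\<Sum>j=1..K. p j * lhat K gamma loss t p x j) = p x * loss t x / mix K gamma p x"
    using assms by (simp add: lhat_def if_distrib[of "(*) _"] sum.delta cong: if_cong)
  then show ?thesis
    by (simp add: wsu_step_def lhat_def)
qed

lemma wsu_step_two_arms_unit_loss:
  assumes "x \<in> {1, 2}" "y \<in> {1, 2}" "x \<noteq> y" "loss t x = 1" "p x + p y = 1"
  shows "wsu_step 2 eta gamma loss t p x x = p x * (1 - eta * p y / mix 2 gamma p x)"
    and "wsu_step 2 eta gamma loss t p x y = p y * (1 + eta * p x / mix 2 gamma p x)"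
proof -
  have x: "x \<in> {1..2}" using assms(1) by auto
  have "1 / mix 2 gamma p x - p x / mix 2 gamma p x = p y / mix 2 gamma p x"
    using assms(5) by (simp add: diff_divide_distrib[symmetric])
  then show "wsu_step 2 eta gamma loss t p x x = p x * (1 - eta * p y / mix 2 gamma p x)"
    using assms(4) by (simp add: wsu_step_drawn[OF x])
  show "wsu_step 2 eta gamma loss t p x y = p y * (1 + eta * p x / mix 2 gamma p x)"
    using assms(3,4) by (simp add: wsu_step_drawn[OF x])
qed

definition two_arm_dist :: "(nat \<Rightarrow> real) \<Rightarrow> bool" where
  "two_arm_dist p \<longleftrightarrow> 0 < p 1 \<and> 0 \<le> p 2 \<and> p 1 + p 2 = 1"

definition odds :: "(nat \<Rightarrow> real) \<Rightarrow> real" where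
  "odds p = p 2 / p 1"

lemma sum_two_arms: "(\<Sum>i=1..2::nat. f i) = f 1 + f 2"
  by (simp add: numeral_2_eq_2)

lemma valid_pair_2D:
  assumes "valid_pair 2 eta gamma"
  shows "0 < eta" "eta < 1/2" "0 < gamma" "gamma < 1/2" "4 * eta \<le> gamma"
  using assms by (auto simp: valid_pair_def field_simps)

lemma mix_two_arms_sum:
  "p 1 + p 2 = 1 \<Longrightarrow> mix 2 gamma p 1 + mix 2 gamma p 2 = 1"
  by (simp add: mix_def algebra_simps flip: distrib_left)

lemma mix_two_arms_lower:
  assumes "valid_pair 2 eta gamma" "two_arm_dist p" "i \<in> {1, 2}"
  shows "2 * eta \<le> mix 2 gamma p i" "p i / 2 \<le> mix 2 gamma p i"
proof -
  note par = valid_pair_2D[OF assms(1)]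
  have "0 \<le> p i" using assms(2,3) by (auto simp: two_arm_dist_def)
  then show "2 * eta \<le> mix 2 gamma p i" "p i / 2 \<le> mix 2 gamma p i"
    using par mult_right_mono[of gamma "1/2" "p i"] by (auto simp: mix_def algebra_simps)
qed

lemma two_arm_dist_wsu_step:
  assumes v: "valid_pair 2 eta gamma" and p: "two_arm_dist p"
    and x: "x \<in> {1, 2}" and l: "loss t x \<in> {0, 1}"
  shows "two_arm_dist (wsu_step 2 eta gamma loss t p x)"
proof (cases "loss t x = 0")
  case True
  then show ?thesis using p by (simp add: wsu_step_zero_loss)
next
  case False
  then have l1: "loss t x = 1" using l by simp
  define y where "y = 3 - x"
  have xy: "x = 1 \<and> y = 2 \<or> x = 2 \<and> y = 1" using x by (auto simp: y_def)
  then have y: "y \<in> {1, 2}" "x \<noteq> y" and sum: "p x + p y = 1"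
    using p by (auto simp: two_arm_dist_def)
  define m where "m = mix 2 gamma p x"
  have "0 < eta" using valid_pair_2D[OF v] by simp
  moreover have "2 * eta \<le> m" unfolding m_def by (rule mix_two_arms_lower[OF v p x])
  moreover have "0 \<le> p x" "0 \<le> p y" "p y \<le> 1" using xy p by (auto simp: two_arm_dist_def)
  ultimately have "eta * p y < m" "0 < m"
    using mult_left_le[of "p y" eta] by linarith+
  moreover have "0 \<le> eta * p x / m"
    using \<open>0 < eta\<close> \<open>0 \<le> p x\<close> \<open>0 < m\<close> by simp
  ultimately have shrink: "0 < 1 - eta * p y / m" and grow: "0 < 1 + eta * p x / m"
    by auto
  note step = wsu_step_two_arms_unit_loss[where p = p and eta = eta and gamma = gamma and loss = loss,
      OF x y l1 sum, folded m_def]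
  have "p x * (1 - eta * p y / m) + p y * (1 + eta * p x / m) = p x + p y"
    by (simp add: algebra_simps)
  with xy p shrink grow step show ?thesis
    by (auto simp: two_arm_dist_def add.commute)
qed

text \<open>With \<open>D = m\<^sub>1 - \<eta>p\<^sub>2\<close> the left side is \<open>(p\<^sub>2/p\<^sub>1) (D + \<eta>m\<^sub>1)/D\<close>, and \<open>m\<^sub>1 \<le> 2D\<close>.\<close>
lemma odds_bound_arm1_penalized:
  fixes p1 p2 m1 m2 eta :: real
  assumes p: "0 < p1" "0 \<le> p2" "p1 + p2 = 1" and m: "m1 + m2 = 1" "0 < m1"
    and eta: "0 \<le> eta" "2 * eta * p2 \<le> m1"
  shows "m1 * (p2 * (1 + eta * p1 / m1) / (p1 * (1 - eta * p2 / m1))) + m2 * (p2 / p1)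
           \<le> (1 + 2 * eta) * (p2 / p1)"
proof -
  define D where "D = m1 - eta * p2"
  have "0 \<le> eta * p2" using eta p by simp
  then have "0 < D" "m1 \<le> 2 * D" using m eta by (auto simp: D_def)
  have "1 + eta * p1 / m1 = (m1 + eta * p1) / m1" "1 - eta * p2 / m1 = D / m1"
    using m by (simp_all add: D_def field_simps)
  then have "p2 * (1 + eta * p1 / m1) / (p1 * (1 - eta * p2 / m1)) = (p2 / p1) * ((m1 + eta * p1) / D)"
    using m by simp
  then have "m1 * (p2 * (1 + eta * p1 / m1) / (p1 * (1 - eta * p2 / m1))) + m2 * (p2 / p1)
      = m1 * ((p2 / p1) * ((m1 + eta * p1) / D)) + m2 * (p2 / p1)"
    by (simp only:)
  also have "\<dots> = (p2 / p1) * ((m1 * (m1 + eta * p1) + m2 * D) / D)"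
    using \<open>0 < D\<close> \<open>0 < p1\<close> by (simp add: field_simps)
  also have "m1 * (m1 + eta * p1) + m2 * D = D + eta * m1"
  proof -
    have m2: "m2 = 1 - m1" and p1: "p1 = 1 - p2" using m p by simp_all
    show ?thesis unfolding D_def m2 p1 by (simp add: algebra_simps)
  qed
  also have "(p2 / p1) * ((D + eta * m1) / D) \<le> (p2 / p1) * (1 + 2 * eta)"
  proof (rule mult_left_mono)
    have "eta * m1 \<le> eta * (2 * D)" using \<open>m1 \<le> 2 * D\<close> eta(1) by (rule mult_left_mono)
    then show "(D + eta * m1) / D \<le> 1 + 2 * eta"
      using \<open>0 < D\<close> by (simp add: divide_le_eq algebra_simps)
  qed (use p in simp)
  finally show ?thesis by (simp add: mult.commute)
qed

text \<open>With \<open>D = m\<^sub>2 + \<eta>p\<^sub>2\<close> the left side is \<open>(p\<^sub>2/p\<^sub>1) (D - \<eta>m\<^sub>2)/D\<close>, and \<open>D \<le> 2m\<^sub>2\<close>.\<close>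
lemma odds_bound_arm2_penalized:
  fixes p1 p2 m1 m2 eta :: real
  assumes p: "0 < p1" "0 \<le> p2" "p1 + p2 = 1" and m: "m1 + m2 = 1" "0 < m2"
    and eta: "0 \<le> eta" "eta * p2 \<le> m2"
  shows "m1 * (p2 / p1) + m2 * (p2 * (1 - eta * p1 / m2) / (p1 * (1 + eta * p2 / m2)))
           \<le> (1 - eta / 2) * (p2 / p1)"
proof -
  define D where "D = m2 + eta * p2"
  have "0 \<le> eta * p2" using eta p by simp
  then have "0 < D" "D \<le> 2 * m2" using m eta by (auto simp: D_def)
  have "1 - eta * p1 / m2 = (m2 - eta * p1) / m2" "1 + eta * p2 / m2 = D / m2"
    using m by (simp_all add: D_def field_simps)
  then have "p2 * (1 - eta * p1 / m2) / (p1 * (1 + eta * p2 / m2)) = (p2 / p1) * ((m2 - eta * p1) / D)"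
    using m by simp
  then have "m1 * (p2 / p1) + m2 * (p2 * (1 - eta * p1 / m2) / (p1 * (1 + eta * p2 / m2)))
      = m1 * (p2 / p1) + m2 * ((p2 / p1) * ((m2 - eta * p1) / D))"
    by (simp only:)
  also have "\<dots> = (p2 / p1) * ((m1 * D + m2 * (m2 - eta * p1)) / D)"
    using \<open>0 < D\<close> \<open>0 < p1\<close> by (simp add: field_simps)
  also have "m1 * D + m2 * (m2 - eta * p1) = D - eta * m2"
  proof -
    have m1: "m1 = 1 - m2" and p1: "p1 = 1 - p2" using m p by simp_all
    show ?thesis unfolding D_def m1 p1 by (simp add: algebra_simps)
  qed
  also have "(p2 / p1) * ((D - eta * m2) / D) \<le> (p2 / p1) * (1 - eta / 2)"
  proof (rule mult_left_mono)
    have "eta * D \<le> eta * (2 * m2)" using \<open>D \<le> 2 * m2\<close> eta(1) by (rule mult_left_mono)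
    then have "D - eta * m2 \<le> (1 - eta / 2) * D" by (simp add: algebra_simps)
    then show "(D - eta * m2) / D \<le> 1 - eta / 2"
      using \<open>0 < D\<close> by (simp add: divide_le_eq)
  qed (use p in simp)
  finally show ?thesis by (simp add: mult.commute)
qed

lemma odds_step_arm1_penalized:
  assumes v: "valid_pair 2 eta gamma" and p: "two_arm_dist p"
    and l: "loss t 1 = 1" "loss t 2 = 0"
  shows "(\<Sum>x=1..2. mix 2 gamma p x * odds (wsu_step 2 eta gamma loss t p x))
           \<le> (1 + 2 * eta) * odds p"
proof -
  have p12: "0 < p 1" "0 \<le> p 2" "p 1 + p 2 = 1" using p by (auto simp: two_arm_dist_def)
  note par = valid_pair_2D[OF v]
  have "2 * eta * p 2 \<le> 2 * eta" using par p12 by (simp add: mult_left_le)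
  also have "\<dots> \<le> mix 2 gamma p 1" using mix_two_arms_lower[OF v p] by simp
  finally have "2 * eta * p 2 \<le> mix 2 gamma p 1" .
  note step = wsu_step_two_arms_unit_loss[where p = p and eta = eta and gamma = gamma
      and loss = loss and x = 1 and y = 2, OF _ _ _ l(1) p12(3)]
  show ?thesis
    using \<open>2 * eta * p 2 \<le> mix 2 gamma p 1\<close> step odds_bound_arm1_penalized[OF p12 mix_two_arms_sum[OF p12(3)]] par
      mix_two_arms_lower[OF v p, of 1]
    unfolding sum_two_arms odds_def wsu_step_zero_loss[where loss = loss, OF l(2)]
    by simp
qed

lemma odds_step_arm2_penalized:
  assumes v: "valid_pair 2 eta gamma" and p: "two_arm_dist p"
    and l: "loss t 1 = 0" "loss t 2 = 1"
  shows "(\<Sum>x=1..2. mix 2 gamma p x * odds (wsu_step 2 eta gamma loss t p x))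
           \<le> (1 - eta / 2) * odds p"
proof -
  have p12: "0 < p 1" "0 \<le> p 2" "p 1 + p 2 = 1" using p by (auto simp: two_arm_dist_def)
  note par = valid_pair_2D[OF v]
  have "eta * p 2 \<le> p 2 / 2" using par p12 mult_right_mono[of eta "1/2" "p 2"] by simp
  also have "\<dots> \<le> mix 2 gamma p 2" using mix_two_arms_lower[OF v p] by simp
  finally have "eta * p 2 \<le> mix 2 gamma p 2" .
  have "p 2 + p 1 = 1" using p12 by simp
  note step = wsu_step_two_arms_unit_loss[where p = p and eta = eta and gamma = gamma
      and loss = loss and x = 2 and y = 1, OF _ _ _ l(2) this]
  show ?thesis
    using \<open>eta * p 2 \<le> mix 2 gamma p 2\<close> step odds_bound_arm2_penalized[OF p12 mix_two_arms_sum[OF p12(3)]] par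
      mix_two_arms_lower[OF v p, of 2]
    unfolding sum_two_arms odds_def wsu_step_zero_loss[where loss = loss, OF l(1)]
    by simp
qed

lemma of_nat_le_divide_iff_le_div:
  assumes "0 < k"
  shows "real t \<le> real T / real k \<longleftrightarrow> t \<le> T div k"
proof -
  have "real t \<le> real T / real k \<longleftrightarrow> t * k \<le> T"
    using assms by (simp add: pos_le_divide_eq flip: of_nat_mult)
  also have "\<dots> \<longleftrightarrow> t \<le> T div k" using assms by (simp add: less_eq_div_iff_mult_less_eq)
  finally show ?thesis .
qed

lemma two_phase_loss_first_phase:
  "t \<le> T div 100 \<Longrightarrow> two_phase_loss T t 1 = 1 \<and> two_phase_loss T t 2 = 0"
  by (simp add: two_phase_loss_def of_nat_le_divide_iff_le_div[of 100, simplified])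

lemma two_phase_loss_second_phase:
  "T div 100 < t \<Longrightarrow> two_phase_loss T t 1 = 0 \<and> two_phase_loss T t 2 = 1"
  by (simp add: two_phase_loss_def of_nat_le_divide_iff_le_div[of 100, simplified])

lemma wsu_invariant_two_phase:
  assumes v: "valid_pair 2 eta gamma"
  shows "wsu_invariant 2 eta gamma (two_phase_loss T) two_arm_dist"
  unfolding wsu_invariant_def
proof (intro conjI allI impI)
  show "two_arm_dist (\<lambda>i. 1 / real 2)" by (simp add: two_arm_dist_def)
next
  fix t p x assume p: "two_arm_dist p" and "x \<in> {1..2::nat}"
  then have x: "x \<in> {1, 2}" by auto
  show "0 \<le> mix 2 gamma p x"
    using mix_two_arms_lower(1)[OF v p x] valid_pair_2D(1)[OF v] by linarith
  show "two_arm_dist (wsu_step 2 eta gamma (two_phase_loss T) t p x)"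
    by (rule two_arm_dist_wsu_step[OF v p x]) (simp add: two_phase_loss_def)
qed

lemma hist_expectation_odds_two_phase:
  assumes v: "valid_pair 2 eta gamma"
  shows "hist_expectation 2 eta gamma (two_phase_loss T) n odds
           \<le> (1 + 2 * eta) ^ min n (T div 100) * (1 - eta / 2) ^ (n - T div 100)"
proof (induction n)
  case 0
  have "histories 2 0 = {[]}" by (auto simp: histories_def)
  then show ?case by (simp add: hist_expectation_def hist_prob_def odds_def)
next
  case (Suc n)
  note inv = wsu_invariant_two_phase[OF v]
  note par = valid_pair_2D[OF v]
  show ?case
  proof (cases "Suc n \<le> T div 100")
    case True
    then have "hist_expectation 2 eta gamma (two_phase_loss T) (Suc n) odds
        \<le> (1 + 2 * eta) * hist_expectation 2 eta gamma (two_phase_loss T) n odds"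
      using two_phase_loss_first_phase[OF True]
      by (intro hist_expectation_Suc_le[OF inv] odds_step_arm1_penalized[OF v]) auto
    also have "\<dots> \<le> (1 + 2 * eta) * ((1 + 2 * eta) ^ min n (T div 100) * (1 - eta / 2) ^ (n - T div 100))"
      using Suc.IH par by (intro mult_left_mono) auto
    finally show ?thesis using True by (simp add: min_def)
  next
    case False
    then have "hist_expectation 2 eta gamma (two_phase_loss T) (Suc n) odds
        \<le> (1 - eta / 2) * hist_expectation 2 eta gamma (two_phase_loss T) n odds"
      using two_phase_loss_second_phase[of T "Suc n"]
      by (intro hist_expectation_Suc_le[OF inv] odds_step_arm2_penalized[OF v]) auto
    also have "\<dots> \<le> (1 - eta / 2) * ((1 + 2 * eta) ^ min n (T div 100) * (1 - eta / 2) ^ (n - T div 100))"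
      using Suc.IH par by (intro mult_left_mono) auto
    finally have "hist_expectation 2 eta gamma (two_phase_loss T) (Suc n) odds
        \<le> (1 - eta / 2) * ((1 + 2 * eta) ^ min n (T div 100) * (1 - eta / 2) ^ (n - T div 100))" .
    moreover have "T div 100 \<le> n" using False by simp
    ultimately show ?thesis by (simp add: Suc_diff_le mult.left_commute)
  qed
qed

lemma expected_pi_arm2_le_odds:
  assumes "valid_pair 2 eta gamma"
  shows "expected_pi 2 eta gamma (two_phase_loss T) t 2
           \<le> hist_expectation 2 eta gamma (two_phase_loss T) (t - 1) odds"
  unfolding expected_pi_eq_hist_expectation
proof (rule hist_expectation_mono[OF wsu_invariant_two_phase[OF assms]])
  fix p :: "nat \<Rightarrow> real" assume "two_arm_dist p"
  then have "0 < p 1" "p 1 \<le> 1" "0 \<le> p 2" by (auto simp: two_arm_dist_def)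
  then show "p 2 \<le> odds p" by (simp add: odds_def le_divide_eq mult_left_le)
qed

lemma growth_then_decay_le_quarter:
  fixes eta :: real
  assumes eta: "0 \<le> eta" "eta \<le> 2" and n: "31 * m \<le> n" and em: "3 \<le> 10 * eta * real m"
  shows "(1 + 2 * eta) ^ min n m * (1 - eta / 2) ^ (n - m) \<le> 1 / 4"
proof -
  have "min n m = m" using n by simp
  then have "(1 + 2 * eta) ^ min n m \<le> exp (2 * eta) ^ m"
    using eta exp_ge_add_one_self[of "2 * eta"] by (simp add: power_mono)
  moreover have "(1 - eta / 2) ^ (n - m) \<le> (1 - eta / 2) ^ (30 * m)"
    using n eta by (intro power_decreasing) auto
  moreover have "\<dots> \<le> exp (- (eta / 2)) ^ (30 * m)"
    using eta exp_ge_add_one_self[of "- (eta / 2)"] by (intro power_mono) auto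
  ultimately have "(1 + 2 * eta) ^ min n m * (1 - eta / 2) ^ (n - m)
      \<le> exp (2 * eta) ^ m * exp (- (eta / 2)) ^ (30 * m)"
    using eta by (intro mult_mono) auto
  also have "\<dots> = exp (- (13 * eta * real m))"
    by (simp add: exp_of_nat_mult[symmetric] exp_add[symmetric] algebra_simps)
  also have "\<dots> \<le> exp (- 3.9)" using em by simp
  also have "\<dots> \<le> 1 / 4"
    using exp_ge_add_one_self[of "3.9 :: real"] by (simp add: exp_minus field_simps)
  finally show ?thesis .
qed

lemma nontrivial_regime_eta_mult_ge:
  assumes "nontrivial_regime T eta gamma" "27000 \<le> T"
  shows "30 \<le> eta * real T"
proof -
  have T: "0 < real T" using assms(2) by simp
  have "(real T powr (1/3)) ^ 3 = 30 ^ 3 * (real T / 27000)"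
    using T by (simp add: powr_realpow[symmetric] powr_powr)
  then have "30 ^ 3 \<le> (real T powr (1/3)) ^ 3" using assms(2) by simp
  then have "30 \<le> real T powr (1/3)" using power_mono_iff[of 30 "real T powr (1/3)" 3] by simp
  also have "real T powr (1/3) = real T powr (-2/3 + 1)"
    by simp
  also have "\<dots> = real T powr (-2/3) * real T"
    unfolding powr_add using T by simp
  also have "\<dots> \<le> eta * real T"
    using assms(1) T by (simp add: nontrivial_regime_def)
  finally show ?thesis .
qed

theorem mainTheorem20:
  fixes eta gamma :: "nat \<Rightarrow> real"
  assumes "\<And>T. T \<ge> 1 \<Longrightarrow> 100 dvd T \<Longrightarrow>
             valid_pair 2 (eta T) (gamma T) \<and> nontrivial_regime T (eta T) (gamma T)"
  shows "\<exists>T0. \<forall>T \<ge> T0. T \<ge> 1 \<longrightarrow> 100 dvd T \<longrightarrow>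
           (\<forall>t. real T / 100 + 2 * real T / 10 + real T / 10 < real t \<and> t \<le> T \<longrightarrow>
              expected_pi 2 (eta T) (gamma T) (two_phase_loss T) t 2 \<le> 1/4)"
proof (intro exI[of _ 27000] allI impI, elim conjE)
  fix T t :: nat
  assume T: "27000 \<le> T" "1 \<le> T" "100 dvd T"
    and t: "real T / 100 + 2 * real T / 10 + real T / 10 < real t"
  have v: "valid_pair 2 (eta T) (gamma T)" and nt: "nontrivial_regime T (eta T) (gamma T)"
    using assms T by auto
  have T100: "real T = 100 * real (T div 100)" using T(3) by auto
  then have "31 * (T div 100) \<le> t - 1" using t by linarith
  moreover have "3 \<le> 10 * eta T * real (T div 100)"
    using nontrivial_regime_eta_mult_ge[OF nt T(1)] T100 by simp
  moreover have "0 \<le> eta T" "eta T \<le> 2" using valid_pair_2D[OF v] by auto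
  ultimately have "(1 + 2 * eta T) ^ min (t - 1) (T div 100) * (1 - eta T / 2) ^ (t - 1 - T div 100) \<le> 1 / 4"
    by (intro growth_then_decay_le_quarter)
  then show "expected_pi 2 (eta T) (gamma T) (two_phase_loss T) t 2 \<le> 1 / 4"
    using expected_pi_arm2_le_odds[OF v] hist_expectation_odds_two_phase[OF v]
    by (meson order_trans)
qed

end
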